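(* Let $f=\frac1n\sum_{i=1}^n f_i:\mathbb{R}^d\to\mathbb{R}$ where each $f_i$ is quadratic (so each $\nabla f_i$ is linear), and let $\mu,\mu'\in(0,1)$, $\eta,\eta'>0$. Consider the SME-ASGD $$dP_t=-\nabla f(M_t)\,dt-\sqrt{(1-\mu)/\eta}\,P_t\,dt+\sigma\,(\eta(1-\mu))^{1/4}\,dB_t,\qquad dM_t=P_t\,dt,$$ and the SME-MSGD $$dP_t=-\nabla f(X_t)\,dt-\frac{1-\mu'}{\sqrt{\eta'}}\,P_t\,dt+\sigma\,(\eta')^{1/4}\,dB_t,\qquad dX_t=P_t\,dt,$$ where $B_t$ is a standard $d$-dimensional Brownian motion. Assume that the noise coefficients of the two equations are the same constant matrix $\sigma$. If $\mu'=\mu$ and $\eta'=\eta(1-\mu)$, then the two equations have the same stationary distribution.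
   Context: These equations are continuous-time models ("stochastic modified equations") of, respectively, asynchronous SGD $x_{k+1}=x_k-\eta\nabla f_{\gamma_k}(x_{k-\tau_k})$ with staleness $\tau_k$ geometrically distributed with parameter $\mu$ ($\mathbb{P}(\tau_k=l)=(1-\mu)\mu^l$, $l\ge0$), and momentum SGD $v_{k+1}=\mu' v_k-\eta'\nabla f_{\gamma_k}(x_k)$, $x_{k+1}=x_k+v_{k+1}$. Standing assumption of the paper: both stochastic differential equations above are ergodic (so each has a unique stationary distribution). *)

theory Defs
  imports "HOL-Probability.Probability"
begin

definition quadratic_fun :: "(real^'d \<Rightarrow> real) \<Rightarrow> bool" where
  "quadratic_fun f \<longleftrightarrow>
     (\<exists>(A::real^'d^'d) (b::real^'d) (c::real). \<forall>x. f x = x \<bullet> (A *v x) + b \<bullet> x + c)"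

definition grad :: "(real^'d \<Rightarrow> real) \<Rightarrow> real^'d \<Rightarrow> real^'d" where
  "grad f x = (THE D. (f has_derivative (\<lambda>h. D \<bullet> h)) (at x))"

definition std_brownian_motion :: "'w measure \<Rightarrow> (real \<Rightarrow> 'w \<Rightarrow> real^'d) \<Rightarrow> bool" where
  "std_brownian_motion M B \<longleftrightarrow>
     prob_space M \<and>
     (\<forall>t. B t \<in> borel_measurable M) \<and>
     (\<forall>\<omega>\<in>space M. B 0 \<omega> = 0 \<and> continuous_on {0..} (\<lambda>t. B t \<omega>)) \<and>
     (\<forall>(k::nat) (ts::nat \<Rightarrow> real). (\<forall>j<k. 0 \<le> ts j \<and> ts j < ts (Suc j)) \<longrightarrow>
        prob_space.indep_vars M (\<lambda>_. borel) (\<lambda>j \<omega>. B (ts (Suc j)) \<omega> - B (ts j) \<omega>) {..<k}) \<and>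
     (\<forall>s t. 0 \<le> s \<and> s < t \<longrightarrow>
        prob_space.indep_vars M (\<lambda>_. borel) (\<lambda>i \<omega>. (B t \<omega> - B s \<omega>) $ i) UNIV \<and>
        (\<forall>i. distributed M lborel (\<lambda>\<omega>. (B t \<omega> - B s \<omega>) $ i)
                (\<lambda>x. ennreal (normal_density 0 (sqrt (t - s)) x))))"

text \<open>Stationary distribution of the SDE with additive noise
  dZ_t = b(Z_t) dt + S(dB_t), B a standard d-dimensional Brownian motion and S linear
  (constant noise coefficient).  Since the noise is additive, a (strong) solution is a
  continuous process with Z_t = Z_0 + int_0^t b(Z_s) ds + S(B_t) pathwise.
  pi is stationary iff every solution started from Z_0 ~ pi, independent of B,
  satisfies Z_t ~ pi for all t >= 0.  The sample-space type is a parameter.\<close>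
definition sde_stationary ::
  "'w itself \<Rightarrow> ('z::euclidean_space \<Rightarrow> 'z) \<Rightarrow> (real^'d \<Rightarrow> 'z) \<Rightarrow> 'z measure \<Rightarrow> bool" where
  "sde_stationary _ b S \<pi> \<longleftrightarrow>
     prob_space \<pi> \<and> sets \<pi> = sets borel \<and>
     (\<forall>(M::'w measure) (B::real \<Rightarrow> 'w \<Rightarrow> real^'d) (Z::real \<Rightarrow> 'w \<Rightarrow> 'z).
        std_brownian_motion M B \<and>
        Z 0 \<in> borel_measurable M \<and>
        distr M borel (Z 0) = \<pi> \<and>
        prob_space.indep_set M
          (sigma_sets (space M) {Z 0 -` U \<inter> space M | U. U \<in> sets borel})
          (sigma_sets (space M) {B t -` U \<inter> space M | t U. 0 \<le> t \<and> U \<in> sets borel}) \<and>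
        (\<forall>\<omega>\<in>space M. continuous_on {0..} (\<lambda>t. Z t \<omega>) \<and>
           (\<forall>t\<ge>0. ((\<lambda>s. b (Z s \<omega>)) has_integral (Z t \<omega> - Z 0 \<omega> - S (B t \<omega>))) {0..t}))
        \<longrightarrow> (\<forall>t\<ge>0. distr M borel (Z t) = \<pi>))"

end

theory Submission
  imports Defs
begin

lemma real_sqrt_friction_eq:
  fixes \<mu> \<eta> :: real
  assumes "\<mu> < 1" "0 < \<eta>"
  shows "(1 - \<mu>) / sqrt (\<eta> * (1 - \<mu>)) = sqrt ((1 - \<mu>) / \<eta>)"
proof -
  have pos: "0 < 1 - \<mu>" using assms(1) by simp
  have "(1 - \<mu>) / sqrt (\<eta> * (1 - \<mu>)) = (sqrt (1 - \<mu>) * sqrt (1 - \<mu>)) / (sqrt \<eta> * sqrt (1 - \<mu>))"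
    using pos by (simp add: real_sqrt_mult)
  also have "\<dots> = sqrt (1 - \<mu>) / sqrt \<eta>"
    using pos assms(2) by (simp add: field_simps)
  finally show ?thesis by (simp add: real_sqrt_divide)
qed

text \<open>Under the substitution the two SDEs have literally the same drift and the same
  noise coefficient, so their stationary distributions coincide.\<close>

theorem proposition1:
  fixes fs :: "nat \<Rightarrow> real^'d \<Rightarrow> real" and n :: nat
    and \<mu> \<mu>' \<eta> \<eta>' :: real and \<sigma> :: "real^'d^'d" and W :: "'w itself"
  assumes "n \<ge> 1"
    and "\<forall>i<n. quadratic_fun (fs i)"
    and "0 < \<mu>" "\<mu> < 1" "0 < \<mu>'" "\<mu>' < 1" "0 < \<eta>" "0 < \<eta>'"
    and "\<mu>' = \<mu>" "\<eta>' = \<eta> * (1 - \<mu>)"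
  defines "f \<equiv> \<lambda>x. (\<Sum>i<n. fs i x) / real n"
  shows "\<forall>\<pi>::((real^'d) \<times> (real^'d)) measure.
     sde_stationary W
        (\<lambda>(p, m). (- grad f m - sqrt ((1 - \<mu>) / \<eta>) *\<^sub>R p, p))
        (\<lambda>w. ((\<eta> * (1 - \<mu>)) powr (1/4) *\<^sub>R (\<sigma> *v w), 0)) \<pi>
     \<longleftrightarrow>
     sde_stationary W
        (\<lambda>(p, x). (- grad f x - ((1 - \<mu>') / sqrt \<eta>') *\<^sub>R p, p))
        (\<lambda>w. (\<eta>' powr (1/4) *\<^sub>R (\<sigma> *v w), 0)) \<pi>"
proof -
  have "(1 - \<mu>') / sqrt \<eta>' = sqrt ((1 - \<mu>) / \<eta>)"
    using real_sqrt_friction_eq[OF assms(4,7)] assms(9,10) by simp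
  then show ?thesis using assms(10) by simp
qed

end
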